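(* Let $N>0$ and $\rho_\zeta=\frac{1}{\pi N}\int_{\mathbb C}\exp(-|\alpha-\zeta|^2/N)|\alpha\rangle\langle\alpha|\,d^2\alpha$ for $\zeta\in\mathbb C$. Let $p,q$ be non-negative integers with $1\le p+q\le k$ and $p\le q$. Then the entry of $L^R_k$ corresponding to $\frac{d^{p+q}}{d\zeta^pd\bar\zeta^q}$ (i.e. the operator $L$ with $\frac{d^{p+q}}{d\zeta^pd\bar\zeta^q}\rho_\zeta=\rho_\zeta L$) is $$\sum_{r=0}^{\min(p,q)}(-1)^{\min(p,q)-r}\binom{\max(p,q)}{\min(p,q)-r}\frac{\min(p,q)!}{r!}\,\frac{(a-\zeta)^{r+\max(0,q-p)}(a^\dagger-\bar\zeta)^{r+\max(0,p-q)}}{N^p(N+1)^{r+\max(0,q-p)}},$$ and the corresponding entry of $L^L_k$ (the operator $L$ with $\frac{d^{p+q}}{d\zeta^pd\bar\zeta^q}\rho_\zeta=L\rho_\zeta$) is $$\sum_{r=0}^{\min(p,q)}(-1)^{\min(p,q)-r}\binom{\max(p,q)}{\min(p,q)-r}\frac{\min(p,q)!}{r!}\,\frac{(a-\zeta)^{r+\max(0,q-p)}(a^\dagger-\bar\zeta)^{r+\max(0,p-q)}}{N^q(N+1)^{r+\max(0,p-q)}}.$$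
   Context: $\ell^2$ has orthonormal basis $\{e_n\}$, $a$ is the annihilation operator $ae_n=\sqrt ne_{n-1}$, $|\alpha\rangle=e^{-|\alpha|^2/2}\sum_n\frac{\alpha^n}{\sqrt{n!}}e_n$, $d^2\alpha=dx\,dy$. With $\zeta=x+\sqrt{-1}y$, $\frac{d^m}{d\zeta^nd\bar\zeta^{m-n}}=2^{-m}(\partial_x-\sqrt{-1}\partial_y)^n(\partial_x+\sqrt{-1}\partial_y)^{m-n}$. $L^R_k$ (resp. $L^L_k$) is the column vector of operators on $\ell^2$ whose entries $L$ satisfy $\frac{d^{m}}{d\zeta^{m-l}d\bar\zeta^{l}}\rho_\zeta=\rho_\zeta L$ (resp. $=L\rho_\zeta$) for $1\le m\le k$, $0\le l\le m$. *)

theory Defs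
  imports "HOL-Analysis.Analysis"
begin

text \<open>Vectors / sequences are represented by their coordinates in the orthonormal
  basis e_n, i.e. as functions nat \<Rightarrow> complex.  Operators are represented
  either by matrix elements (for rho) or as maps on coordinate sequences
  (for polynomials in a and its adjoint).\<close>

definition basis_vec :: "nat \<Rightarrow> nat \<Rightarrow> complex" where
  "basis_vec n = (\<lambda>k. if k = n then 1 else 0)"

definition coh :: "complex \<Rightarrow> nat \<Rightarrow> complex" where
  "coh \<alpha> n = complex_of_real (exp (- ((norm \<alpha>)\<^sup>2) / 2)) * \<alpha> ^ n
               / complex_of_real (sqrt (fact n))"

definition rho :: "real \<Rightarrow> complex \<Rightarrow> nat \<Rightarrow> nat \<Rightarrow> complex" where
  "rho N \<zeta> m n = complex_of_real (1 / (pi * N)) *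
     (\<integral>\<alpha>. complex_of_real (exp (- ((norm (\<alpha> - \<zeta>))\<^sup>2) / N)) * coh \<alpha> m * cnj (coh \<alpha> n) \<partial>lborel)"

definition Dx :: "(complex \<Rightarrow> complex) \<Rightarrow> complex \<Rightarrow> complex" where
  "Dx f z = vector_derivative (\<lambda>t::real. f (z + complex_of_real t)) (at 0)"

definition Dy :: "(complex \<Rightarrow> complex) \<Rightarrow> complex \<Rightarrow> complex" where
  "Dy f z = vector_derivative (\<lambda>t::real. f (z + \<i> * complex_of_real t)) (at 0)"

definition Dz :: "(complex \<Rightarrow> complex) \<Rightarrow> complex \<Rightarrow> complex" where
  "Dz f z = (Dx f z - \<i> * Dy f z) / 2"

definition Dzb :: "(complex \<Rightarrow> complex) \<Rightarrow> complex \<Rightarrow> complex" where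
  "Dzb f z = (Dx f z + \<i> * Dy f z) / 2"

text \<open>a - zeta and a^dagger - conj zeta acting on coordinate sequences
  (a e_n = sqrt n e_(n-1), a^dagger e_n = sqrt(n+1) e_(n+1)).\<close>
definition ann_m :: "complex \<Rightarrow> (nat \<Rightarrow> complex) \<Rightarrow> nat \<Rightarrow> complex" where
  "ann_m \<zeta> v k = complex_of_real (sqrt (real (k + 1))) * v (k + 1) - \<zeta> * v k"

definition cre_m :: "complex \<Rightarrow> (nat \<Rightarrow> complex) \<Rightarrow> nat \<Rightarrow> complex" where
  "cre_m \<zeta> v k = (if k = 0 then 0 else complex_of_real (sqrt (real k)) * v (k - 1)) - cnj \<zeta> * v k"

definition coef :: "nat \<Rightarrow> nat \<Rightarrow> nat \<Rightarrow> complex" where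
  "coef p q r = (-1) ^ (min p q - r) * of_nat (max p q choose (min p q - r))
                * of_nat (fact (min p q)) / of_nat (fact r)"

text \<open>Note: on nat, (q - p) is max(0, q-p).  The operator
  (a-zeta)^s (a^dagger - conj zeta)^t applies (a^dagger - conj zeta)^t first.\<close>
definition LR_op :: "real \<Rightarrow> complex \<Rightarrow> nat \<Rightarrow> nat \<Rightarrow> (nat \<Rightarrow> complex) \<Rightarrow> nat \<Rightarrow> complex" where
  "LR_op N \<zeta> p q v = (\<lambda>k. \<Sum>r = 0..min p q. coef p q r *
      ((ann_m \<zeta> ^^ (r + (q - p))) ((cre_m \<zeta> ^^ (r + (p - q))) v)) k
      / complex_of_real (N ^ p * (N + 1) ^ (r + (q - p))))"

definition LL_op :: "real \<Rightarrow> complex \<Rightarrow> nat \<Rightarrow> nat \<Rightarrow> (nat \<Rightarrow> complex) \<Rightarrow> nat \<Rightarrow> complex" where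
  "LL_op N \<zeta> p q v = (\<lambda>k. \<Sum>r = 0..min p q. coef p q r *
      ((ann_m \<zeta> ^^ (r + (q - p))) ((cre_m \<zeta> ^^ (r + (p - q))) v)) k
      / complex_of_real (N ^ q * (N + 1) ^ (r + (p - q))))"

end

(*
  Write \<rho>[i,j] for the operator
    1/(\<pi> N) \<integral> exp (-|\<alpha> - \<zeta>|\<^sup>2/N) (\<alpha> - \<zeta>)^i (cnj \<alpha> - cnj \<zeta>)^j |\<alpha>><\<alpha>| d\<^sup>2\<alpha>
  with matrix elements rho_moment N i j \<zeta>, so that \<rho>\<^sub>\<zeta> = \<rho>[0,0].  Differentiating the Gaussian kernel
  under the integral sign gives
    d/d\<zeta> \<rho>[i,j] = \<rho>[i,j+1]/N - i \<rho>[i-1,j]    and    d/d(cnj \<zeta>) \<rho>[i,j] = \<rho>[i+1,j]/N - j \<rho>[i,j-1],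
  hence, by induction on p (the coefficients obeying a Pascal-type recursion),
    d^(p+q) \<rho>/d\<zeta>^p d(cnj \<zeta>)^q = (\<Sum>r\<le>p. coef p q r / N^(q+r) \<rho>[q-p+r,r])   for p \<le> q.
  Substituting \<alpha> = \<beta> + \<zeta> and differentiating the coherent states instead gives a second
  formula for the same derivatives; comparing the two, and using a|\<alpha>> = \<alpha>|\<alpha>>, yields the
  ladder relations
    (a - \<zeta>) \<rho>[i,j] = \<rho>[i+1,j],        (a\<^sup>\<dagger> - cnj \<zeta>) \<rho>[0,j] = (1 + 1/N) \<rho>[0,j+1],
    \<rho>[i,j] (a\<^sup>\<dagger> - cnj \<zeta>) = \<rho>[i,j+1],   \<rho>[i,0] (a - \<zeta>) = (1 + 1/N) \<rho>[i+1,0].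
  So (a - \<zeta>)^s (a\<^sup>\<dagger> - cnj \<zeta>)^r \<rho>\<^sub>\<zeta> = (1 + 1/N)^r \<rho>[s,r] and
  \<rho>\<^sub>\<zeta> (a - \<zeta>)^s (a\<^sup>\<dagger> - cnj \<zeta>)^r = (1 + 1/N)^s \<rho>[s,r], and both identities follow.
*)

theory Submission
  imports Defs "HOL-Probability.Distributions"
begin

lemma pow_div_fact_le_exp:
  fixes y :: real
  assumes "0 \<le> y"
  shows "y ^ d / fact d \<le> exp y"
proof -
  have "y ^ d / fact d \<le> (\<Sum>n\<le>d. y ^ n / fact n)"
    using assms by (intro member_le_sum) auto
  also have "\<dots> \<le> exp y"
    using assms summable_exp_generic[of y]
    by (auto simp: exp_def divide_inverse ac_simps intro!: sum_le_suminf)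
  finally show ?thesis .
qed

lemma pow_mult_exp_neg_square_le:
  fixes x N :: real
  assumes "0 \<le> x" "0 < N"
  shows "x ^ d * exp (- x\<^sup>2 / N) \<le> 1 + fact d * N ^ d"
proof -
  have "x ^ d \<le> 1 + (x ^ d)\<^sup>2"
    using zero_le_power2[of "x ^ d - 1"] zero_le_power[OF assms(1), of d] by (simp add: power2_diff)
  also have "(x ^ d)\<^sup>2 = x ^ (2 * d)"
    by (simp add: power_mult[symmetric] mult.commute)
  also have "x ^ (2 * d) = N ^ d * (x\<^sup>2 / N) ^ d"
    using assms(2) by (simp add: power_mult power_divide)
  also have "\<dots> \<le> N ^ d * (fact d * exp (x\<^sup>2 / N))"
    using pow_div_fact_le_exp[of "x\<^sup>2 / N" d] assms
    by (intro mult_left_mono) (auto simp: divide_le_eq mult.commute)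
  finally have "x ^ d * exp (- x\<^sup>2 / N) \<le> exp (- x\<^sup>2 / N) + fact d * N ^ d"
    by (auto simp: algebra_simps exp_minus field_simps intro: order.trans[OF mult_right_mono])
  moreover have "exp (- x\<^sup>2 / N) \<le> 1"
    using assms by simp
  ultimately show ?thesis by linarith
qed

lemma integrable_exp_neg_square:
  fixes c :: real
  assumes "0 < c"
  shows "integrable lborel (\<lambda>x::real. exp (- x\<^sup>2 / c))"
proof -
  define \<sigma> where "\<sigma> = sqrt (c / 2)"
  have \<sigma>: "0 < \<sigma>" "2 * \<sigma>\<^sup>2 = c"
    using assms by (simp_all add: \<sigma>_def)
  have "exp (- x\<^sup>2 / c) = sqrt (2 * pi * \<sigma>\<^sup>2) * normal_density 0 \<sigma> x" for x
    using \<sigma> by (simp add: normal_density_def)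
  then show ?thesis
    using \<sigma>(1) by simp
qed

lemma integrable_exp_neg_norm_square:
  fixes c :: real
  assumes "0 < c"
  shows "integrable lborel (\<lambda>z::'a::euclidean_space. exp (- (norm z)\<^sup>2 / c))"
proof (subst integrable_iff_bounded, intro conjI)
  show "(\<lambda>z::'a. exp (- (norm z)\<^sup>2 / c)) \<in> borel_measurable lborel"
    by measurable
  have exp_prod: "exp (- (norm z)\<^sup>2 / c) = (\<Prod>b\<in>Basis. exp (- (z \<bullet> b)\<^sup>2 / c))" for z :: 'a
    unfolding power2_norm_eq_inner euclidean_inner[of z z]
    by (simp add: exp_sum[symmetric] sum_divide_distrib sum_negf power2_eq_square)
  have "(\<integral>\<^sup>+z. ennreal (norm (exp (- (norm z)\<^sup>2 / c))) \<partial>(lborel :: 'a measure))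
      = (\<integral>\<^sup>+z. (\<Prod>b\<in>Basis. ennreal (exp (- (z \<bullet> b)\<^sup>2 / c))) \<partial>(lborel :: 'a measure))"
    by (intro nn_integral_cong) (simp only: exp_prod, simp add: prod_ennreal abs_prod)
  also have "\<dots> = (\<Prod>b\<in>(Basis :: 'a set). \<integral>\<^sup>+x. ennreal (exp (- x\<^sup>2 / c)) \<partial>lborel)"
    by (rule nn_integral_lborel_prod) auto
  also have "\<dots> < \<infinity>"
    using integrable_exp_neg_square[OF assms]
    by (simp add: integrable_iff_bounded power_less_top_ennreal)
  finally show "(\<integral>\<^sup>+z. ennreal (norm (exp (- (norm z)\<^sup>2 / c))) \<partial>(lborel :: 'a measure)) < \<infinity>" .
qed

lemma integrable_norm_pow_mult_exp_neg_norm_square: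
  fixes c :: real
  assumes "0 < c"
  shows "integrable lborel (\<lambda>z::'a::euclidean_space. norm z ^ d * exp (- (norm z)\<^sup>2 / c))"
proof (rule Bochner_Integration.integrable_bound)
  let ?C = "1 + fact d * (2 * c) ^ d"
  show "integrable lborel (\<lambda>z::'a. ?C * exp (- (norm z)\<^sup>2 / (2 * c)))"
    using assms by (intro integrable_mult_right integrable_exp_neg_norm_square) auto
  show "AE z in (lborel :: 'a measure). norm (norm z ^ d * exp (- (norm z)\<^sup>2 / c))
      \<le> norm (?C * exp (- (norm z)\<^sup>2 / (2 * c)))"
  proof (intro AE_I2)
    fix z :: 'a
    have "exp (- (norm z)\<^sup>2 / c) = exp (- (norm z)\<^sup>2 / (2 * c)) * exp (- (norm z)\<^sup>2 / (2 * c))"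
      using assms by (simp add: exp_add[symmetric] field_simps)
    then have "norm z ^ d * exp (- (norm z)\<^sup>2 / c)
        = (norm z ^ d * exp (- (norm z)\<^sup>2 / (2 * c))) * exp (- (norm z)\<^sup>2 / (2 * c))"
      by (simp only: mult.assoc)
    also have "\<dots> \<le> ?C * exp (- (norm z)\<^sup>2 / (2 * c))"
      using assms by (intro mult_right_mono pow_mult_exp_neg_square_le) auto
    finally show "norm (norm z ^ d * exp (- (norm z)\<^sup>2 / c)) \<le> norm (?C * exp (- (norm z)\<^sup>2 / (2 * c)))"
      by simp
  qed
qed (simp add: borel_measurable_continuous_onI)

lemma integrable_bounded_mult:
  fixes f g :: "'a \<Rightarrow> complex"
  assumes "integrable M f" "g \<in> borel_measurable M" "\<And>x. norm (g x) \<le> C"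
  shows "integrable M (\<lambda>x. g x * f x)"
proof (rule Bochner_Integration.integrable_bound)
  show "integrable M (\<lambda>x. C * norm (f x))"
    using assms(1) by (intro integrable_mult_right integrable_norm)
  show "AE x in M. norm (g x * f x) \<le> norm (C * norm (f x))"
    using assms(3) order.trans[OF norm_ge_zero assms(3)]
    by (intro AE_I2) (simp add: norm_mult abs_of_nonneg mult_right_mono)
qed (use assms in measurable)

section \<open>Differentiation under the integral sign\<close>

lemma has_vector_derivative_iff_difference_quotient:
  fixes f :: "real \<Rightarrow> 'a::real_normed_vector"
  shows "(f has_vector_derivative D) (at t) \<longleftrightarrow>
    ((\<lambda>h. inverse (h - t) *\<^sub>R (f h - f t)) \<longlongrightarrow> D) (at t)"
proof -
  have "((\<lambda>h. norm (f h - f t - (h - t) *\<^sub>R D) / norm (h - t)) \<longlongrightarrow> 0) (at t) \<longleftrightarrow>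
        ((\<lambda>h. norm (inverse (h - t) *\<^sub>R (f h - f t) - D)) \<longlongrightarrow> 0) (at t)"
  proof (rule tendsto_cong, rule eventually_mono[OF eventually_neq_at_within[of t]])
    fix h assume "h \<noteq> t"
    then have "inverse (h - t) *\<^sub>R (f h - f t) - D = inverse (h - t) *\<^sub>R (f h - f t - (h - t) *\<^sub>R D)"
      by (simp add: scaleR_diff_right)
    then show "norm (f h - f t - (h - t) *\<^sub>R D) / norm (h - t) = norm (inverse (h - t) *\<^sub>R (f h - f t) - D)"
      by (simp add: divide_inverse abs_inverse mult.commute)
  qed
  then show ?thesis
    unfolding has_vector_derivative_def has_derivative_iff_norm
    by (simp add: bounded_linear_scaleR_left tendsto_norm_zero_iff LIM_zero_iff)
qed

lemma has_vector_derivative_integral: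
  fixes F F' :: "real \<Rightarrow> 'a \<Rightarrow> 'b::{banach, second_countable_topology}"
  assumes integrable: "\<And>s. integrable M (F s)"
    and deriv: "\<And>s x. ((\<lambda>s. F s x) has_vector_derivative F' s x) (at s)"
    and bound: "\<And>s x. norm (F' s x) \<le> G x" and "integrable M G"
    and "F' t \<in> borel_measurable M"
  shows "((\<lambda>s. \<integral>x. F s x \<partial>M) has_vector_derivative (\<integral>x. F' t x \<partial>M)) (at t)"
proof -
  have lipschitz: "norm (F a x - F b x) \<le> G x * norm (a - b)" for a b x
    using deriv bound unfolding has_vector_derivative_def
    by (intro differentiable_bound[where S = UNIV and f' = "\<lambda>s h. h *\<^sub>R F' s x"])
      (auto simp: onorm_scaleR_left onorm_id)
  have quotient_bound: "norm (inverse (h - t) *\<^sub>R (F h x - F t x)) \<le> G x" if "h \<noteq> t" for h x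
  proof -
    have "norm (inverse (h - t) *\<^sub>R (F h x - F t x)) = norm (F h x - F t x) / \<bar>h - t\<bar>"
      by (simp only: norm_scaleR abs_inverse divide_inverse mult.commute)
    also have "\<dots> \<le> G x"
      using lipschitz[where a = h and b = t] that by (simp add: pos_divide_le_eq)
    finally show ?thesis .
  qed
  show ?thesis
    unfolding has_vector_derivative_iff_difference_quotient
  proof (subst tendsto_at_iff_sequentially, intro allI impI)
    fix X :: "nat \<Rightarrow> real"
    assume X: "\<forall>i. X i \<in> UNIV - {t}" and "X \<longlonglongrightarrow> t"
    then have "filterlim X (at t) sequentially"
      by (auto simp: filterlim_at)
    from filterlim_compose[OF deriv[where s = t, unfolded has_vector_derivative_iff_difference_quotient] this]
    have "AE x in M. (\<lambda>i. inverse (X i - t) *\<^sub>R (F (X i) x - F t x)) \<longlonglongrightarrow> F' t x"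
      by simp
    then have "(\<lambda>i. \<integral>x. inverse (X i - t) *\<^sub>R (F (X i) x - F t x) \<partial>M) \<longlonglongrightarrow> (\<integral>x. F' t x \<partial>M)"
      using assms X quotient_bound
      by (intro integral_dominated_convergence[where w = G]) auto
    then show "((\<lambda>h. inverse (h - t) *\<^sub>R ((\<integral>x. F h x \<partial>M) - (\<integral>x. F t x \<partial>M))) \<circ> X) \<longlonglongrightarrow> (\<integral>x. F' t x \<partial>M)"
      using integrable by (simp add: comp_def)
  qed
qed

lemma has_vector_derivative_at_shift_zero:
  "((\<lambda>h. g (s + h)) has_vector_derivative D) (at 0) \<Longrightarrow> (g has_vector_derivative D) (at s)"
  by (simp add: has_vector_derivative_def has_derivative_at)

section \<open>Wirtinger derivatives\<close>

definition has_wirtinger_derivs ::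
    "(complex \<Rightarrow> complex) \<Rightarrow> (complex \<Rightarrow> complex) \<Rightarrow> (complex \<Rightarrow> complex) \<Rightarrow> bool" where
  "has_wirtinger_derivs f A B \<longleftrightarrow>
    (\<forall>z e. ((\<lambda>t. f (z + of_real t * e)) has_vector_derivative e * A z + cnj e * B z) (at 0))"

lemma has_wirtinger_derivs_Dz_Dzb:
  assumes "has_wirtinger_derivs f A B"
  shows "Dz f = A" and "Dzb f = B"
proof -
  have "((\<lambda>t. f (z + of_real t * e)) has_vector_derivative e * A z + cnj e * B z) (at 0)" for z e
    using assms unfolding has_wirtinger_derivs_def by blast
  from this[of _ 1] this[of _ \<i>]
  have dx: "Dx f z = A z + B z" and dy: "Dy f z = \<i> * A z - \<i> * B z" for z
    unfolding Dx_def Dy_def by (simp_all add: vector_derivative_at mult.commute)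
  show "Dz f = A" "Dzb f = B"
    by (simp_all add: Dz_def Dzb_def fun_eq_iff dx dy field_simps)
qed

lemma has_wirtinger_derivs_eq_rhs:
  "has_wirtinger_derivs f A B \<Longrightarrow> (\<And>z. A z = A' z) \<Longrightarrow> (\<And>z. B z = B' z) \<Longrightarrow>
    has_wirtinger_derivs f A' B'"
  by (metis ext)

lemma has_wirtinger_derivs_const: "has_wirtinger_derivs (\<lambda>_. c) (\<lambda>_. 0) (\<lambda>_. 0)"
  by (simp add: has_wirtinger_derivs_def)

lemma has_wirtinger_derivs_ident: "has_wirtinger_derivs (\<lambda>z. z) (\<lambda>_. 1) (\<lambda>_. 0)"
  unfolding has_wirtinger_derivs_def
  by (auto intro!: derivative_eq_intros)

lemma has_wirtinger_derivs_cnj: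
  "has_wirtinger_derivs f A B \<Longrightarrow> has_wirtinger_derivs (\<lambda>z. cnj (f z)) (\<lambda>z. cnj (B z)) (\<lambda>z. cnj (A z))"
  unfolding has_wirtinger_derivs_def
  by (auto intro!: has_vector_derivative_eq_rhs[OF has_vector_derivative_cnj])

lemma has_wirtinger_derivs_mult:
  "has_wirtinger_derivs f A B \<Longrightarrow> has_wirtinger_derivs g C D \<Longrightarrow>
    has_wirtinger_derivs (\<lambda>z. f z * g z) (\<lambda>z. A z * g z + f z * C z) (\<lambda>z. B z * g z + f z * D z)"
  unfolding has_wirtinger_derivs_def
  by (auto intro!: has_vector_derivative_eq_rhs[OF has_vector_derivative_mult] simp: algebra_simps)

lemma has_wirtinger_derivs_cmult:
  "has_wirtinger_derivs f A B \<Longrightarrow> has_wirtinger_derivs (\<lambda>z. c * f z) (\<lambda>z. c * A z) (\<lambda>z. c * B z)"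
  unfolding has_wirtinger_derivs_def
  by (auto intro!: has_vector_derivative_eq_rhs[OF has_vector_derivative_mult_right] simp: algebra_simps)

lemma has_wirtinger_derivs_sum:
  "(\<And>r. r \<in> R \<Longrightarrow> has_wirtinger_derivs (f r) (A r) (B r)) \<Longrightarrow>
    has_wirtinger_derivs (\<lambda>z. \<Sum>r\<in>R. f r z) (\<lambda>z. \<Sum>r\<in>R. A r z) (\<lambda>z. \<Sum>r\<in>R. B r z)"
  unfolding has_wirtinger_derivs_def
  by (auto intro!: has_vector_derivative_eq_rhs[OF has_vector_derivative_sum]
      simp: sum_distrib_left sum.distrib)

lemma has_wirtinger_derivs_chain:
  assumes "has_wirtinger_derivs f A B" and "\<And>w. (g has_field_derivative g' w) (at w)"
  shows "has_wirtinger_derivs (\<lambda>z. g (f z)) (\<lambda>z. g' (f z) * A z) (\<lambda>z. g' (f z) * B z)"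
  unfolding has_wirtinger_derivs_def
proof (intro allI)
  fix z e
  have "((\<lambda>t. f (z + of_real t * e)) has_vector_derivative e * A z + cnj e * B z) (at 0)"
    using assms(1) unfolding has_wirtinger_derivs_def by blast
  from field_vector_diff_chain_at[OF this assms(2)]
  show "((\<lambda>t. g (f (z + of_real t * e))) has_vector_derivative
      e * (g' (f z) * A z) + cnj e * (g' (f z) * B z)) (at 0)"
    by (simp add: comp_def algebra_simps)
qed

lemma has_wirtinger_derivs_exp:
  "has_wirtinger_derivs f A B \<Longrightarrow>
    has_wirtinger_derivs (\<lambda>z. exp (f z)) (\<lambda>z. exp (f z) * A z) (\<lambda>z. exp (f z) * B z)"
  by (erule has_wirtinger_derivs_chain[where g = exp, OF _ DERIV_exp])

lemma has_wirtinger_derivs_power: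
  "has_wirtinger_derivs f A B \<Longrightarrow>
    has_wirtinger_derivs (\<lambda>z. f z ^ n)
      (\<lambda>z. of_nat n * f z ^ (n - 1) * A z) (\<lambda>z. of_nat n * f z ^ (n - 1) * B z)"
  by (erule has_wirtinger_derivs_chain[where g = "\<lambda>w. w ^ n"]) (auto intro!: derivative_eq_intros)

lemmas has_wirtinger_derivs_intros =
  has_wirtinger_derivs_cmult has_wirtinger_derivs_mult has_wirtinger_derivs_exp
  has_wirtinger_derivs_power has_wirtinger_derivs_cnj has_wirtinger_derivs_ident
  has_wirtinger_derivs_const

lemma has_wirtinger_derivs_shift:
  assumes "has_wirtinger_derivs f A B"
  shows "has_wirtinger_derivs (\<lambda>z. f (c + z)) (\<lambda>z. A (c + z)) (\<lambda>z. B (c + z))"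
  unfolding has_wirtinger_derivs_def
proof (intro allI)
  fix z e
  have "((\<lambda>t. f (c + z + of_real t * e)) has_vector_derivative e * A (c + z) + cnj e * B (c + z)) (at 0)"
    using assms unfolding has_wirtinger_derivs_def by blast
  then show "((\<lambda>t. f (c + (z + of_real t * e))) has_vector_derivative e * A (c + z) + cnj e * B (c + z)) (at 0)"
    by (simp add: add.assoc)
qed

lemma has_wirtinger_derivs_reflect:
  assumes "has_wirtinger_derivs f A B"
  shows "has_wirtinger_derivs (\<lambda>z. f (c - z)) (\<lambda>z. - A (c - z)) (\<lambda>z. - B (c - z))"
  unfolding has_wirtinger_derivs_def
proof (intro allI)
  fix z e
  have "((\<lambda>t. f (c - z + of_real t * - e)) has_vector_derivative - e * A (c - z) + cnj (- e) * B (c - z)) (at 0)"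
    using assms unfolding has_wirtinger_derivs_def by blast
  then show "((\<lambda>t. f (c - (z + of_real t * e))) has_vector_derivative e * - A (c - z) + cnj e * - B (c - z)) (at 0)"
    by (simp add: algebra_simps)
qed

lemma has_wirtinger_derivs_integral:
  fixes f A B :: "complex \<Rightarrow> 'a \<Rightarrow> complex"
  assumes integrable: "\<And>z. integrable M (f z)"
    and deriv: "\<And>x. has_wirtinger_derivs (\<lambda>z. f z x) (\<lambda>z. A z x) (\<lambda>z. B z x)"
    and measurable: "\<And>z. A z \<in> borel_measurable M" "\<And>z. B z \<in> borel_measurable M"
    and bound: "\<And>z x. norm (A z x) \<le> G x" "\<And>z x. norm (B z x) \<le> G x" and "integrable M G"
  shows "has_wirtinger_derivs (\<lambda>z. \<integral>x. f z x \<partial>M) (\<lambda>z. \<integral>x. A z x \<partial>M) (\<lambda>z. \<integral>x. B z x \<partial>M)"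
  unfolding has_wirtinger_derivs_def
proof (intro allI)
  fix z e
  define F' where "F' s x = e * A (z + of_real s * e) x + cnj e * B (z + of_real s * e) x" for s x
  have "((\<lambda>t. f (z + of_real t * e) x) has_vector_derivative F' s x) (at s)" for s x
  proof (rule has_vector_derivative_at_shift_zero)
    have "((\<lambda>h. f (z + of_real s * e + of_real h * e) x) has_vector_derivative F' s x) (at 0)"
      using deriv[of x] unfolding has_wirtinger_derivs_def F'_def by blast
    then show "((\<lambda>h. f (z + of_real (s + h) * e) x) has_vector_derivative F' s x) (at 0)"
      by (simp add: algebra_simps)
  qed
  moreover have "norm (F' s x) \<le> 2 * norm e * G x" for s x
  proof -
    have "norm (F' s x) \<le> norm e * norm (A (z + of_real s * e) x) + norm e * norm (B (z + of_real s * e) x)"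
      using norm_triangle_ineq[of "e * A (z + of_real s * e) x" "cnj e * B (z + of_real s * e) x"]
      by (simp add: F'_def norm_mult)
    also have "\<dots> \<le> norm e * G x + norm e * G x"
      by (intro add_mono mult_left_mono bound) auto
    finally show ?thesis by (simp add: mult_ac)
  qed
  ultimately have "((\<lambda>t. \<integral>x. f (z + of_real t * e) x \<partial>M) has_vector_derivative (\<integral>x. F' 0 x \<partial>M)) (at 0)"
    using integrable measurable \<open>integrable M G\<close> unfolding F'_def
    by (intro has_vector_derivative_integral[where G = "\<lambda>x. 2 * norm e * G x"]) auto
  moreover have "integrable M (A z)" "integrable M (B z)"
    using order.trans[OF bound(1) abs_ge_self] order.trans[OF bound(2) abs_ge_self]
      measurable \<open>integrable M G\<close>
    by (auto intro!: Bochner_Integration.integrable_bound[where f = G] AE_I2)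
  ultimately show "((\<lambda>t. \<integral>x. f (z + of_real t * e) x \<partial>M) has_vector_derivative
      e * (\<integral>x. A z x \<partial>M) + cnj e * (\<integral>x. B z x \<partial>M)) (at 0)"
    by (simp add: F'_def)
qed

lemma of_real_exp_neg_norm_square:
  "complex_of_real (exp (- (norm u)\<^sup>2 / c)) = exp (of_real (- 1 / c) * (u * cnj u))"
proof -
  have "of_real (- 1 / c) * (u * cnj u) = complex_of_real (- (norm u)\<^sup>2 / c)"
    by (simp add: complex_norm_square[symmetric])
  then show ?thesis
    by (simp only: exp_of_real)
qed

definition gauss_monomial :: "real \<Rightarrow> nat \<Rightarrow> nat \<Rightarrow> complex \<Rightarrow> complex" where
  "gauss_monomial N i j u = of_real (exp (- (norm u)\<^sup>2 / N)) * u ^ i * cnj u ^ j"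

lemma gauss_monomial_Suc_left: "gauss_monomial N (Suc i) j u = u * gauss_monomial N i j u"
  by (simp add: gauss_monomial_def mult_ac)

lemma gauss_monomial_Suc_right: "gauss_monomial N i (Suc j) u = cnj u * gauss_monomial N i j u"
  by (simp add: gauss_monomial_def mult_ac)

lemma norm_gauss_monomial: "norm (gauss_monomial N i j u) = norm u ^ (i + j) * exp (- (norm u)\<^sup>2 / N)"
  by (simp add: gauss_monomial_def norm_mult norm_power power_add)

lemma norm_gauss_monomial_le: "0 < N \<Longrightarrow> norm (gauss_monomial N i j u) \<le> 1 + fact (i + j) * N ^ (i + j)"
  unfolding norm_gauss_monomial by (rule pow_mult_exp_neg_square_le) auto

lemma norm_diff_scaled_gauss_monomials_le:
  assumes "0 < N"
  shows "norm (gauss_monomial N a b u / of_real N - of_nat k * gauss_monomial N c d u)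
    \<le> (1 + fact (a + b) * N ^ (a + b)) / N + k * (1 + fact (c + d) * N ^ (c + d))"
proof -
  have "norm (gauss_monomial N a b u / of_real N - of_nat k * gauss_monomial N c d u)
      \<le> norm (gauss_monomial N a b u) / N + k * norm (gauss_monomial N c d u)"
    using assms by (intro order.trans[OF norm_triangle_ineq4]) (simp add: norm_divide norm_mult)
  also have "\<dots> \<le> (1 + fact (a + b) * N ^ (a + b)) / N + k * (1 + fact (c + d) * N ^ (c + d))"
    using assms by (intro add_mono divide_right_mono mult_left_mono norm_gauss_monomial_le) auto
  finally show ?thesis .
qed

lemma borel_measurable_cnj [measurable]: "cnj \<in> borel_measurable borel"
  by (intro borel_measurable_continuous_onI continuous_on_cnj continuous_on_id)

lemma borel_measurable_gauss_monomial [measurable]: "gauss_monomial N i j \<in> borel_measurable borel"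
  unfolding gauss_monomial_def by measurable

lemma integrable_gauss_monomial:
  assumes "0 < N"
  shows "integrable lborel (gauss_monomial N i j)"
  by (rule Bochner_Integration.integrable_bound[OF integrable_norm_pow_mult_exp_neg_norm_square[OF assms]])
    (auto simp: norm_gauss_monomial)

lemma has_wirtinger_derivs_gauss_monomial:
  "has_wirtinger_derivs (gauss_monomial N i j)
     (\<lambda>u. of_nat i * gauss_monomial N (i - 1) j u - gauss_monomial N i (Suc j) u / of_real N)
     (\<lambda>u. of_nat j * gauss_monomial N i (j - 1) u - gauss_monomial N (Suc i) j u / of_real N)"
  unfolding gauss_monomial_def of_real_exp_neg_norm_square
  by (rule has_wirtinger_derivs_eq_rhs, (rule has_wirtinger_derivs_intros)+)
    (simp_all add: algebra_simps divide_inverse)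

lemma coh_Suc: "of_real (sqrt (Suc k)) * coh \<alpha> (Suc k) = \<alpha> * coh \<alpha> k"
proof -
  have "sqrt (fact (Suc k)) = sqrt (Suc k) * sqrt (fact k)"
    by (simp add: real_sqrt_mult fact_Suc del: of_nat_Suc)
  then show ?thesis
    unfolding coh_def by (simp add: field_simps del: of_nat_Suc)
qed

lemma real_mult_inverse_sqrt_fact:
  "real m * inverse (sqrt (fact m)) = sqrt m * inverse (sqrt (fact (m - 1)))"
proof (cases m)
  case (Suc k)
  have "sqrt (fact (Suc k)) = sqrt (Suc k) * sqrt (fact k)"
    by (simp add: real_sqrt_mult fact_Suc del: of_nat_Suc)
  then show ?thesis
    using Suc by (simp add: field_simps del: of_nat_Suc)
qed simp

lemma has_wirtinger_derivs_coh:
  "has_wirtinger_derivs (\<lambda>z. coh z m)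
     (\<lambda>z. of_real (sqrt m) * coh z (m - 1) - cnj z / 2 * coh z m) (\<lambda>z. - (z / 2 * coh z m))"
proof -
  define c where "c k = complex_of_real (inverse (sqrt (fact k)))" for k
  define P where "P k z = exp (of_real (- 1 / 2) * (z * cnj z)) * z ^ k" for k z
  have coh: "coh z k = c k * P k z" for z k
    unfolding coh_def c_def P_def of_real_exp_neg_norm_square[symmetric] by (simp add: field_simps)
  have deriv_P: "has_wirtinger_derivs (P m)
      (\<lambda>z. of_nat m * P (m - 1) z - cnj z / 2 * P m z) (\<lambda>z. - (z / 2 * P m z))"
    unfolding P_def
    by (rule has_wirtinger_derivs_eq_rhs, (rule has_wirtinger_derivs_intros)+)
      (simp_all add: algebra_simps)
  have normalisation: "of_nat m * c m = of_real (sqrt m) * c (m - 1)"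
    using arg_cong[OF real_mult_inverse_sqrt_fact, of complex_of_real m] by (simp add: c_def)
  show ?thesis
    unfolding coh
  proof (rule has_wirtinger_derivs_eq_rhs[OF has_wirtinger_derivs_cmult[OF deriv_P]])
    fix z
    have "c m * (of_nat m * P (m - 1) z - cnj z / 2 * P m z)
        = (of_nat m * c m) * P (m - 1) z - cnj z / 2 * (c m * P m z)"
      by (simp add: algebra_simps)
    then show "c m * (of_nat m * P (m - 1) z - cnj z / 2 * P m z)
        = of_real (sqrt m) * (c (m - 1) * P (m - 1) z) - cnj z / 2 * (c m * P m z)"
      by (simp only: normalisation mult.assoc)
  qed simp
qed

definition coherent_proj :: "nat \<Rightarrow> nat \<Rightarrow> complex \<Rightarrow> complex" where
  "coherent_proj m n \<alpha> = coh \<alpha> m * cnj (coh \<alpha> n)"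

lemma borel_measurable_coherent_proj [measurable]: "coherent_proj m n \<in> borel_measurable borel"
  unfolding coherent_proj_def coh_def by (intro borel_measurable_continuous_onI continuous_intros) auto

lemma coherent_proj_Suc_left: "of_real (sqrt (Suc k)) * coherent_proj (Suc k) n \<alpha> = \<alpha> * coherent_proj k n \<alpha>"
  unfolding coherent_proj_def using coh_Suc[of k \<alpha>] by (metis mult.assoc)

lemma coherent_proj_Suc_right: "of_real (sqrt (Suc l)) * coherent_proj m (Suc l) \<alpha> = cnj \<alpha> * coherent_proj m l \<alpha>"
proof -
  have "of_real (sqrt (Suc l)) * cnj (coh \<alpha> (Suc l)) = cnj \<alpha> * cnj (coh \<alpha> l)"
    using arg_cong[OF coh_Suc[of l \<alpha>], of cnj] by simp
  then show ?thesis
    unfolding coherent_proj_def by (metis mult.left_commute)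
qed

lemma divide_le_self: "0 \<le> a \<Longrightarrow> 1 \<le> b \<Longrightarrow> a / b \<le> (a :: real)"
  using mult_left_mono[of 1 b a] by (simp add: divide_le_eq)

lemma norm_coherent_proj_le: "norm (coherent_proj m n \<alpha>) \<le> norm \<alpha> ^ (m + n) * exp (- (norm \<alpha>)\<^sup>2)"
proof -
  have "norm (coherent_proj m n \<alpha>) = norm \<alpha> ^ (m + n) * exp (- (norm \<alpha>)\<^sup>2) / (sqrt (fact m) * sqrt (fact n))"
    by (simp add: coherent_proj_def coh_def norm_mult norm_divide norm_power power_add
        exp_add[symmetric] field_simps)
  also have "\<dots> \<le> norm \<alpha> ^ (m + n) * exp (- (norm \<alpha>)\<^sup>2)"
    using mult_mono[of 1 "sqrt (fact m)" 1 "sqrt (fact n)"] by (intro divide_le_self) auto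
  finally show ?thesis .
qed

lemma norm_pow_mult_coherent_proj_le: "norm v ^ k * norm (coherent_proj m n v) \<le> 1 + fact (k + m + n)"
proof -
  have "norm v ^ k * norm (coherent_proj m n v) \<le> norm v ^ k * (norm v ^ (m + n) * exp (- (norm v)\<^sup>2))"
    by (intro mult_left_mono norm_coherent_proj_le) auto
  also have "\<dots> = norm v ^ (k + m + n) * exp (- (norm v)\<^sup>2 / 1)"
    by (simp add: power_add mult.assoc)
  also have "\<dots> \<le> 1 + fact (k + m + n) * 1 ^ (k + m + n)"
    by (rule pow_mult_exp_neg_square_le) auto
  finally show ?thesis by simp
qed

lemma norm_diff_scaled_coherent_projs_le:
  fixes k :: nat
  assumes "norm w = norm v"
  shows "norm (of_real (sqrt k) * coherent_proj a b v - w * coherent_proj m n v)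
    \<le> sqrt k * (1 + fact (a + b)) + (1 + fact (1 + m + n))"
proof -
  have "norm (of_real (sqrt k) * coherent_proj a b v - w * coherent_proj m n v)
      \<le> sqrt k * norm (coherent_proj a b v) + norm v ^ 1 * norm (coherent_proj m n v)"
    using assms by (intro order.trans[OF norm_triangle_ineq4]) (simp add: norm_mult abs_mult)
  also have "\<dots> \<le> sqrt k * (1 + fact (a + b)) + (1 + fact (1 + m + n))"
    using norm_pow_mult_coherent_proj_le[of v 0 a b] norm_pow_mult_coherent_proj_le[of v 1 m n]
    by (intro add_mono mult_left_mono) auto
  finally show ?thesis .
qed

lemma integrable_coherent_proj: "integrable lborel (coherent_proj m n)"
  by (rule Bochner_Integration.integrable_bound[OF integrable_norm_pow_mult_exp_neg_norm_square[of 1 "m + n"]])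
    (auto intro!: AE_I2 order.trans[OF norm_coherent_proj_le])

lemma has_wirtinger_derivs_coherent_proj:
  "has_wirtinger_derivs (coherent_proj m n)
     (\<lambda>v. of_real (sqrt m) * coherent_proj (m - 1) n v - cnj v * coherent_proj m n v)
     (\<lambda>v. of_real (sqrt n) * coherent_proj m (n - 1) v - v * coherent_proj m n v)"
  unfolding coherent_proj_def
  by (rule has_wirtinger_derivs_eq_rhs[OF has_wirtinger_derivs_mult[OF
        has_wirtinger_derivs_coh has_wirtinger_derivs_cnj[OF has_wirtinger_derivs_coh]]])
    (simp_all add: algebra_simps)

definition rho_moment :: "real \<Rightarrow> nat \<Rightarrow> nat \<Rightarrow> complex \<Rightarrow> nat \<Rightarrow> nat \<Rightarrow> complex" where
  "rho_moment N i j \<zeta> m n = of_real (1 / (pi * N)) *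
     (\<integral>\<alpha>. gauss_monomial N i j (\<alpha> - \<zeta>) * coherent_proj m n \<alpha> \<partial>lborel)"

lemma rho_eq_rho_moment: "rho N \<zeta> m n = rho_moment N 0 0 \<zeta> m n"
  by (simp add: rho_def rho_moment_def gauss_monomial_def coherent_proj_def mult.assoc)

lemma integrable_rho_moment:
  "0 < N \<Longrightarrow> integrable lborel (\<lambda>\<alpha>. gauss_monomial N i j (\<alpha> - \<zeta>) * coherent_proj m n \<alpha>)"
  by (rule integrable_bounded_mult[OF integrable_coherent_proj _ norm_gauss_monomial_le]) auto

lemma rho_moment_shifted:
  "rho_moment N i j \<zeta> m n = of_real (1 / (pi * N)) *
     (\<integral>\<beta>. gauss_monomial N i j \<beta> * coherent_proj m n (\<beta> + \<zeta>) \<partial>lborel)"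
proof -
  let ?f = "\<lambda>\<alpha>. gauss_monomial N i j (\<alpha> - \<zeta>) * coherent_proj m n \<alpha>"
  have "(\<integral>\<alpha>. ?f \<alpha> \<partial>lborel) = (\<integral>\<alpha>. ?f \<alpha> \<partial>distr lborel borel ((+) \<zeta>))"
    by (simp add: lborel_distr_plus)
  also have "\<dots> = (\<integral>\<beta>. ?f (\<zeta> + \<beta>) \<partial>lborel)"
    by (rule integral_distr) auto
  finally show ?thesis
    unfolding rho_moment_def by (simp add: add.commute)
qed

lemma integrable_rho_moment_shifted:
  assumes "0 < N"
  shows "integrable lborel (\<lambda>\<beta>. gauss_monomial N i j \<beta> * coherent_proj m n (\<beta> + \<zeta>))"
proof -
  have "norm (coherent_proj m n (\<beta> + \<zeta>)) \<le> 1 + fact (m + n)" for \<beta>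
    using norm_pow_mult_coherent_proj_le[of _ 0] by simp
  from integrable_bounded_mult[OF integrable_gauss_monomial[OF assms] _ this]
  show ?thesis
    by (simp add: mult.commute)
qed

lemma has_wirtinger_derivs_rho_moment_kernel:
  assumes N: "0 < N"
  shows "has_wirtinger_derivs (\<lambda>\<zeta>. rho_moment N i j \<zeta> m n)
    (\<lambda>\<zeta>. rho_moment N i (Suc j) \<zeta> m n / of_real N - of_nat i * rho_moment N (i - 1) j \<zeta> m n)
    (\<lambda>\<zeta>. rho_moment N (Suc i) j \<zeta> m n / of_real N - of_nat j * rho_moment N i (j - 1) \<zeta> m n)"
proof -
  define A where "A u = gauss_monomial N i (Suc j) u / of_real N - of_nat i * gauss_monomial N (i - 1) j u" for u
  define B where "B u = gauss_monomial N (Suc i) j u / of_real N - of_nat j * gauss_monomial N i (j - 1) u" for u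
  obtain C where C: "\<And>u. norm (A u) \<le> C" "\<And>u. norm (B u) \<le> C"
    using norm_diff_scaled_gauss_monomials_le[OF N] unfolding A_def B_def
    by (meson max.cobounded1 max.cobounded2 order.trans)
  have "has_wirtinger_derivs (\<lambda>\<zeta>. gauss_monomial N i j (\<alpha> - \<zeta>) * coherent_proj m n \<alpha>)
      (\<lambda>\<zeta>. A (\<alpha> - \<zeta>) * coherent_proj m n \<alpha>) (\<lambda>\<zeta>. B (\<alpha> - \<zeta>) * coherent_proj m n \<alpha>)" for \<alpha>
    by (rule has_wirtinger_derivs_eq_rhs[OF has_wirtinger_derivs_mult[OF
          has_wirtinger_derivs_reflect[OF has_wirtinger_derivs_gauss_monomial] has_wirtinger_derivs_const]])
      (simp_all add: A_def B_def algebra_simps)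
  then have "has_wirtinger_derivs (\<lambda>\<zeta>. \<integral>\<alpha>. gauss_monomial N i j (\<alpha> - \<zeta>) * coherent_proj m n \<alpha> \<partial>lborel)
      (\<lambda>\<zeta>. \<integral>\<alpha>. A (\<alpha> - \<zeta>) * coherent_proj m n \<alpha> \<partial>lborel)
      (\<lambda>\<zeta>. \<integral>\<alpha>. B (\<alpha> - \<zeta>) * coherent_proj m n \<alpha> \<partial>lborel)"
    using integrable_rho_moment[OF N] C integrable_coherent_proj
    by (intro has_wirtinger_derivs_integral[where G = "\<lambda>\<alpha>. C * norm (coherent_proj m n \<alpha>)"])
      (auto simp: A_def B_def norm_mult intro!: mult_right_mono)
  from has_wirtinger_derivs_cmult[OF this, of "of_real (1 / (pi * N))"]
  show ?thesis
    unfolding rho_moment_def[abs_def]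
  proof (rule has_wirtinger_derivs_eq_rhs)
    show "of_real (1 / (pi * N)) * (\<integral>\<alpha>. A (\<alpha> - \<zeta>) * coherent_proj m n \<alpha> \<partial>lborel)
      = of_real (1 / (pi * N)) * (\<integral>\<alpha>. gauss_monomial N i (Suc j) (\<alpha> - \<zeta>) * coherent_proj m n \<alpha> \<partial>lborel) / of_real N
      - of_nat i * (of_real (1 / (pi * N)) * (\<integral>\<alpha>. gauss_monomial N (i - 1) j (\<alpha> - \<zeta>) * coherent_proj m n \<alpha> \<partial>lborel))" for \<zeta>
      using integrable_rho_moment[OF N]
      by (simp add: A_def left_diff_distrib algebra_simps)
    show "of_real (1 / (pi * N)) * (\<integral>\<alpha>. B (\<alpha> - \<zeta>) * coherent_proj m n \<alpha> \<partial>lborel)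
      = of_real (1 / (pi * N)) * (\<integral>\<alpha>. gauss_monomial N (Suc i) j (\<alpha> - \<zeta>) * coherent_proj m n \<alpha> \<partial>lborel) / of_real N
      - of_nat j * (of_real (1 / (pi * N)) * (\<integral>\<alpha>. gauss_monomial N i (j - 1) (\<alpha> - \<zeta>) * coherent_proj m n \<alpha> \<partial>lborel))" for \<zeta>
      using integrable_rho_moment[OF N]
      by (simp add: B_def left_diff_distrib algebra_simps)
  qed
qed

lemma rho_moment_shifted_Dz_coherent_proj:
  assumes N: "0 < N"
  shows "of_real (1 / (pi * N)) * (\<integral>\<beta>. gauss_monomial N i j \<beta> *
      (of_real (sqrt m) * coherent_proj (m - 1) n (\<beta> + \<zeta>) - cnj (\<beta> + \<zeta>) * coherent_proj m n (\<beta> + \<zeta>)) \<partial>lborel)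
    = of_real (sqrt m) * rho_moment N i j \<zeta> (m - 1) n - rho_moment N i (Suc j) \<zeta> m n
      - cnj \<zeta> * rho_moment N i j \<zeta> m n"
proof -
  have "gauss_monomial N i j \<beta> *
      (of_real (sqrt m) * coherent_proj (m - 1) n (\<beta> + \<zeta>) - cnj (\<beta> + \<zeta>) * coherent_proj m n (\<beta> + \<zeta>))
    = of_real (sqrt m) * (gauss_monomial N i j \<beta> * coherent_proj (m - 1) n (\<beta> + \<zeta>))
      - gauss_monomial N i (Suc j) \<beta> * coherent_proj m n (\<beta> + \<zeta>)
      - cnj \<zeta> * (gauss_monomial N i j \<beta> * coherent_proj m n (\<beta> + \<zeta>))" for \<beta>
    by (simp add: gauss_monomial_Suc_right algebra_simps)
  then have integral: "(\<integral>\<beta>. gauss_monomial N i j \<beta> *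
      (of_real (sqrt m) * coherent_proj (m - 1) n (\<beta> + \<zeta>) - cnj (\<beta> + \<zeta>) * coherent_proj m n (\<beta> + \<zeta>)) \<partial>lborel)
    = of_real (sqrt m) * (\<integral>\<beta>. gauss_monomial N i j \<beta> * coherent_proj (m - 1) n (\<beta> + \<zeta>) \<partial>lborel)
      - (\<integral>\<beta>. gauss_monomial N i (Suc j) \<beta> * coherent_proj m n (\<beta> + \<zeta>) \<partial>lborel)
      - cnj \<zeta> * (\<integral>\<beta>. gauss_monomial N i j \<beta> * coherent_proj m n (\<beta> + \<zeta>) \<partial>lborel)"
    using integrable_rho_moment_shifted[OF N] by (simp only:) simp
  show ?thesis
    unfolding rho_moment_shifted integral by (simp add: algebra_simps)
qed

lemma rho_moment_shifted_Dzb_coherent_proj: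
  assumes N: "0 < N"
  shows "of_real (1 / (pi * N)) * (\<integral>\<beta>. gauss_monomial N i j \<beta> *
      (of_real (sqrt n) * coherent_proj m (n - 1) (\<beta> + \<zeta>) - (\<beta> + \<zeta>) * coherent_proj m n (\<beta> + \<zeta>)) \<partial>lborel)
    = of_real (sqrt n) * rho_moment N i j \<zeta> m (n - 1) - rho_moment N (Suc i) j \<zeta> m n
      - \<zeta> * rho_moment N i j \<zeta> m n"
proof -
  have "gauss_monomial N i j \<beta> *
      (of_real (sqrt n) * coherent_proj m (n - 1) (\<beta> + \<zeta>) - (\<beta> + \<zeta>) * coherent_proj m n (\<beta> + \<zeta>))
    = of_real (sqrt n) * (gauss_monomial N i j \<beta> * coherent_proj m (n - 1) (\<beta> + \<zeta>))
      - gauss_monomial N (Suc i) j \<beta> * coherent_proj m n (\<beta> + \<zeta>)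
      - \<zeta> * (gauss_monomial N i j \<beta> * coherent_proj m n (\<beta> + \<zeta>))" for \<beta>
    by (simp add: gauss_monomial_Suc_left algebra_simps)
  then have integral: "(\<integral>\<beta>. gauss_monomial N i j \<beta> *
      (of_real (sqrt n) * coherent_proj m (n - 1) (\<beta> + \<zeta>) - (\<beta> + \<zeta>) * coherent_proj m n (\<beta> + \<zeta>)) \<partial>lborel)
    = of_real (sqrt n) * (\<integral>\<beta>. gauss_monomial N i j \<beta> * coherent_proj m (n - 1) (\<beta> + \<zeta>) \<partial>lborel)
      - (\<integral>\<beta>. gauss_monomial N (Suc i) j \<beta> * coherent_proj m n (\<beta> + \<zeta>) \<partial>lborel)
      - \<zeta> * (\<integral>\<beta>. gauss_monomial N i j \<beta> * coherent_proj m n (\<beta> + \<zeta>) \<partial>lborel)"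
    using integrable_rho_moment_shifted[OF N] by (simp only:) simp
  show ?thesis
    unfolding rho_moment_shifted integral by (simp add: algebra_simps)
qed

lemma has_wirtinger_derivs_rho_moment_coherent:
  assumes N: "0 < N"
  shows "has_wirtinger_derivs (\<lambda>\<zeta>. rho_moment N i j \<zeta> m n)
    (\<lambda>\<zeta>. of_real (sqrt m) * rho_moment N i j \<zeta> (m - 1) n - rho_moment N i (Suc j) \<zeta> m n
      - cnj \<zeta> * rho_moment N i j \<zeta> m n)
    (\<lambda>\<zeta>. of_real (sqrt n) * rho_moment N i j \<zeta> m (n - 1) - rho_moment N (Suc i) j \<zeta> m n
      - \<zeta> * rho_moment N i j \<zeta> m n)"
proof -
  define A where "A v = of_real (sqrt m) * coherent_proj (m - 1) n v - cnj v * coherent_proj m n v" for v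
  define B where "B v = of_real (sqrt n) * coherent_proj m (n - 1) v - v * coherent_proj m n v" for v
  define C where "C = max (sqrt m * (1 + fact (m - 1 + n)) + (1 + fact (1 + m + n)))
    (sqrt n * (1 + fact (m + (n - 1))) + (1 + fact (1 + m + n)))"
  have C: "norm (A v) \<le> C" "norm (B v) \<le> C" for v
    unfolding A_def B_def C_def
    by (rule order.trans[OF norm_diff_scaled_coherent_projs_le], simp,
        rule max.cobounded1 max.cobounded2)+
  have [measurable]: "A \<in> borel_measurable borel" "B \<in> borel_measurable borel"
    unfolding A_def B_def by measurable
  have "has_wirtinger_derivs (\<lambda>\<zeta>. gauss_monomial N i j \<beta> * coherent_proj m n (\<beta> + \<zeta>))
      (\<lambda>\<zeta>. gauss_monomial N i j \<beta> * A (\<beta> + \<zeta>)) (\<lambda>\<zeta>. gauss_monomial N i j \<beta> * B (\<beta> + \<zeta>))" for \<beta>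
    unfolding A_def B_def
    by (intro has_wirtinger_derivs_cmult has_wirtinger_derivs_shift[OF has_wirtinger_derivs_coherent_proj])
  then have "has_wirtinger_derivs (\<lambda>\<zeta>. \<integral>\<beta>. gauss_monomial N i j \<beta> * coherent_proj m n (\<beta> + \<zeta>) \<partial>lborel)
      (\<lambda>\<zeta>. \<integral>\<beta>. gauss_monomial N i j \<beta> * A (\<beta> + \<zeta>) \<partial>lborel)
      (\<lambda>\<zeta>. \<integral>\<beta>. gauss_monomial N i j \<beta> * B (\<beta> + \<zeta>) \<partial>lborel)"
    using integrable_rho_moment_shifted[OF N] C integrable_gauss_monomial[OF N]
    by (intro has_wirtinger_derivs_integral[where G = "\<lambda>\<beta>. C * norm (gauss_monomial N i j \<beta>)"])
      (auto simp: norm_mult mult.commute[of C] intro!: mult_left_mono C)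
  from has_wirtinger_derivs_cmult[OF this, of "of_real (1 / (pi * N))"]
  have "has_wirtinger_derivs (\<lambda>\<zeta>. rho_moment N i j \<zeta> m n)
      (\<lambda>\<zeta>. of_real (1 / (pi * N)) * (\<integral>\<beta>. gauss_monomial N i j \<beta> * A (\<beta> + \<zeta>) \<partial>lborel))
      (\<lambda>\<zeta>. of_real (1 / (pi * N)) * (\<integral>\<beta>. gauss_monomial N i j \<beta> * B (\<beta> + \<zeta>) \<partial>lborel))"
    unfolding rho_moment_shifted .
  then show ?thesis
    unfolding A_def B_def rho_moment_shifted_Dz_coherent_proj[OF N] rho_moment_shifted_Dzb_coherent_proj[OF N] .
qed

section \<open>Ladder relations\<close>

lemma ann_m_rho_moment_column:
  assumes N: "0 < N"
  shows "ann_m \<zeta> (\<lambda>k. rho_moment N i j \<zeta> k n) = (\<lambda>k. rho_moment N (Suc i) j \<zeta> k n)"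
proof
  fix k
  have pointwise: "of_real (sqrt (Suc k)) * (gauss_monomial N i j (\<alpha> - \<zeta>) * coherent_proj (Suc k) n \<alpha>)
      = gauss_monomial N (Suc i) j (\<alpha> - \<zeta>) * coherent_proj k n \<alpha>
        + \<zeta> * (gauss_monomial N i j (\<alpha> - \<zeta>) * coherent_proj k n \<alpha>)" for \<alpha>
  proof -
    have "of_real (sqrt (Suc k)) * (gauss_monomial N i j (\<alpha> - \<zeta>) * coherent_proj (Suc k) n \<alpha>)
        = gauss_monomial N i j (\<alpha> - \<zeta>) * (((\<alpha> - \<zeta>) + \<zeta>) * coherent_proj k n \<alpha>)"
      by (simp add: mult.left_commute[of "of_real (sqrt (Suc k))"] coherent_proj_Suc_left del: of_nat_Suc)
    then show ?thesis
      by (simp add: gauss_monomial_Suc_left algebra_simps)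
  qed
  have "of_real (sqrt (Suc k)) * rho_moment N i j \<zeta> (Suc k) n
      = of_real (1 / (pi * N)) * (\<integral>\<alpha>. of_real (sqrt (Suc k)) *
          (gauss_monomial N i j (\<alpha> - \<zeta>) * coherent_proj (Suc k) n \<alpha>) \<partial>lborel)"
    unfolding rho_moment_def by (simp del: of_nat_Suc)
  also have "\<dots> = of_real (1 / (pi * N)) * (\<integral>\<alpha>. gauss_monomial N (Suc i) j (\<alpha> - \<zeta>) * coherent_proj k n \<alpha>
          + \<zeta> * (gauss_monomial N i j (\<alpha> - \<zeta>) * coherent_proj k n \<alpha>) \<partial>lborel)"
    by (simp only: pointwise)
  also have "\<dots> = rho_moment N (Suc i) j \<zeta> k n + \<zeta> * rho_moment N i j \<zeta> k n"
    using integrable_rho_moment[OF N] unfolding rho_moment_def by (simp add: algebra_simps)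
  finally show "ann_m \<zeta> (\<lambda>k. rho_moment N i j \<zeta> k n) k = rho_moment N (Suc i) j \<zeta> k n"
    by (simp add: ann_m_def)
qed

lemma ann_m_cnj_rho_moment_row:
  assumes N: "0 < N"
  shows "ann_m (cnj \<zeta>) (\<lambda>l. rho_moment N i j \<zeta> m l) = (\<lambda>l. rho_moment N i (Suc j) \<zeta> m l)"
proof
  fix l
  have pointwise: "of_real (sqrt (Suc l)) * (gauss_monomial N i j (\<alpha> - \<zeta>) * coherent_proj m (Suc l) \<alpha>)
      = gauss_monomial N i (Suc j) (\<alpha> - \<zeta>) * coherent_proj m l \<alpha>
        + cnj \<zeta> * (gauss_monomial N i j (\<alpha> - \<zeta>) * coherent_proj m l \<alpha>)" for \<alpha>
  proof -
    have "of_real (sqrt (Suc l)) * (gauss_monomial N i j (\<alpha> - \<zeta>) * coherent_proj m (Suc l) \<alpha>)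
        = gauss_monomial N i j (\<alpha> - \<zeta>) * ((cnj (\<alpha> - \<zeta>) + cnj \<zeta>) * coherent_proj m l \<alpha>)"
      by (simp add: mult.left_commute[of "of_real (sqrt (Suc l))"] coherent_proj_Suc_right del: of_nat_Suc)
    then show ?thesis
      by (simp add: gauss_monomial_Suc_right algebra_simps del: complex_cnj_diff)
  qed
  have "of_real (sqrt (Suc l)) * rho_moment N i j \<zeta> m (Suc l)
      = of_real (1 / (pi * N)) * (\<integral>\<alpha>. of_real (sqrt (Suc l)) *
          (gauss_monomial N i j (\<alpha> - \<zeta>) * coherent_proj m (Suc l) \<alpha>) \<partial>lborel)"
    unfolding rho_moment_def by (simp del: of_nat_Suc)
  also have "\<dots> = of_real (1 / (pi * N)) * (\<integral>\<alpha>. gauss_monomial N i (Suc j) (\<alpha> - \<zeta>) * coherent_proj m l \<alpha>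
          + cnj \<zeta> * (gauss_monomial N i j (\<alpha> - \<zeta>) * coherent_proj m l \<alpha>) \<partial>lborel)"
    by (simp only: pointwise)
  also have "\<dots> = rho_moment N i (Suc j) \<zeta> m l + cnj \<zeta> * rho_moment N i j \<zeta> m l"
    using integrable_rho_moment[OF N] unfolding rho_moment_def by (simp add: algebra_simps)
  finally show "ann_m (cnj \<zeta>) (\<lambda>l. rho_moment N i j \<zeta> m l) l = rho_moment N i (Suc j) \<zeta> m l"
    by (simp add: ann_m_def)
qed

lemma cre_m_rho_moment_column:
  assumes N: "0 < N"
  shows "cre_m \<zeta> (\<lambda>k. rho_moment N 0 j \<zeta> k n) = (\<lambda>k. of_real ((N + 1) / N) * rho_moment N 0 (Suc j) \<zeta> k n)"
proof
  fix k
  have "rho_moment N 0 (Suc j) \<zeta> k n / of_real N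
      = of_real (sqrt k) * rho_moment N 0 j \<zeta> (k - 1) n - rho_moment N 0 (Suc j) \<zeta> k n
        - cnj \<zeta> * rho_moment N 0 j \<zeta> k n"
    using has_wirtinger_derivs_Dz_Dzb(1)[OF has_wirtinger_derivs_rho_moment_kernel[OF N, of 0 j k n]]
      has_wirtinger_derivs_Dz_Dzb(1)[OF has_wirtinger_derivs_rho_moment_coherent[OF N, of 0 j k n]]
    by (simp add: fun_eq_iff)
  then show "cre_m \<zeta> (\<lambda>k. rho_moment N 0 j \<zeta> k n) k = of_real ((N + 1) / N) * rho_moment N 0 (Suc j) \<zeta> k n"
    using N by (simp add: cre_m_def field_simps)
qed

lemma cre_m_cnj_rho_moment_row:
  assumes N: "0 < N"
  shows "cre_m (cnj \<zeta>) (\<lambda>l. rho_moment N i 0 \<zeta> m l) = (\<lambda>l. of_real ((N + 1) / N) * rho_moment N (Suc i) 0 \<zeta> m l)"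
proof
  fix l
  have "rho_moment N (Suc i) 0 \<zeta> m l / of_real N
      = of_real (sqrt l) * rho_moment N i 0 \<zeta> m (l - 1) - rho_moment N (Suc i) 0 \<zeta> m l
        - \<zeta> * rho_moment N i 0 \<zeta> m l"
    using has_wirtinger_derivs_Dz_Dzb(2)[OF has_wirtinger_derivs_rho_moment_kernel[OF N, of i 0 m l]]
      has_wirtinger_derivs_Dz_Dzb(2)[OF has_wirtinger_derivs_rho_moment_coherent[OF N, of i 0 m l]]
    by (simp add: fun_eq_iff)
  then show "cre_m (cnj \<zeta>) (\<lambda>l. rho_moment N i 0 \<zeta> m l) l = of_real ((N + 1) / N) * rho_moment N (Suc i) 0 \<zeta> m l"
    using N by (simp add: cre_m_def field_simps)
qed

lemma ann_m_scale: "ann_m \<zeta> (\<lambda>k. c * v k) = (\<lambda>k. c * ann_m \<zeta> v k)"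
  by (simp add: ann_m_def fun_eq_iff algebra_simps)

lemma cre_m_scale: "cre_m \<zeta> (\<lambda>k. c * v k) = (\<lambda>k. c * cre_m \<zeta> v k)"
  by (simp add: cre_m_def fun_eq_iff algebra_simps)

lemma funpow_ann_m_scale: "(ann_m \<zeta> ^^ s) (\<lambda>k. c * v k) = (\<lambda>k. c * (ann_m \<zeta> ^^ s) v k)"
  by (induction s) (simp_all add: ann_m_scale)

lemma funpow_ann_m_rho_moment_column:
  "0 < N \<Longrightarrow> (ann_m \<zeta> ^^ s) (\<lambda>k. rho_moment N i j \<zeta> k n) = (\<lambda>k. rho_moment N (i + s) j \<zeta> k n)"
  by (induction s) (simp_all add: ann_m_rho_moment_column)

lemma funpow_cre_m_rho_moment_column:
  "0 < N \<Longrightarrow> (cre_m \<zeta> ^^ r) (\<lambda>k. rho_moment N 0 j \<zeta> k n)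
    = (\<lambda>k. of_real ((N + 1) / N) ^ r * rho_moment N 0 (j + r) \<zeta> k n)"
proof (induction r)
  case (Suc r)
  have "(cre_m \<zeta> ^^ Suc r) (\<lambda>k. rho_moment N 0 j \<zeta> k n)
      = cre_m \<zeta> (\<lambda>k. of_real ((N + 1) / N) ^ r * rho_moment N 0 (j + r) \<zeta> k n)"
    using Suc by simp
  also have "\<dots> = (\<lambda>k. of_real ((N + 1) / N) ^ r * cre_m \<zeta> (\<lambda>k. rho_moment N 0 (j + r) \<zeta> k n) k)"
    by (rule cre_m_scale)
  also have "\<dots> = (\<lambda>k. of_real ((N + 1) / N) ^ Suc r * rho_moment N 0 (j + Suc r) \<zeta> k n)"
    using Suc.prems by (simp add: cre_m_rho_moment_column mult_ac)
  finally show ?case .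
qed simp

lemma funpow_ann_m_cnj_rho_moment_row:
  "0 < N \<Longrightarrow> (ann_m (cnj \<zeta>) ^^ r) (\<lambda>l. rho_moment N i j \<zeta> m l) = (\<lambda>l. rho_moment N i (j + r) \<zeta> m l)"
  by (induction r) (simp_all add: ann_m_cnj_rho_moment_row)

lemma funpow_cre_m_cnj_rho_moment_row:
  "0 < N \<Longrightarrow> (cre_m (cnj \<zeta>) ^^ s) (\<lambda>l. rho_moment N i 0 \<zeta> m l)
    = (\<lambda>l. of_real ((N + 1) / N) ^ s * rho_moment N (i + s) 0 \<zeta> m l)"
proof (induction s)
  case (Suc s)
  have "(cre_m (cnj \<zeta>) ^^ Suc s) (\<lambda>l. rho_moment N i 0 \<zeta> m l)
      = cre_m (cnj \<zeta>) (\<lambda>l. of_real ((N + 1) / N) ^ s * rho_moment N (i + s) 0 \<zeta> m l)"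
    using Suc by simp
  also have "\<dots> = (\<lambda>l. of_real ((N + 1) / N) ^ s * cre_m (cnj \<zeta>) (\<lambda>l. rho_moment N (i + s) 0 \<zeta> m l) l)"
    by (rule cre_m_scale)
  also have "\<dots> = (\<lambda>l. of_real ((N + 1) / N) ^ Suc s * rho_moment N (i + Suc s) 0 \<zeta> m l)"
    using Suc.prems by (simp add: cre_m_cnj_rho_moment_row mult_ac)
  finally show ?case .
qed simp

lemma funpow_ann_m_cre_m_rho_moment_column:
  "0 < N \<Longrightarrow> (ann_m \<zeta> ^^ s) ((cre_m \<zeta> ^^ r) (\<lambda>k. rho_moment N 0 0 \<zeta> k n))
    = (\<lambda>k. of_real ((N + 1) / N) ^ r * rho_moment N s r \<zeta> k n)"
  by (simp add: funpow_cre_m_rho_moment_column funpow_ann_m_scale funpow_ann_m_rho_moment_column)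

lemma ann_m_vanishes_from: "\<forall>l\<ge>B. w l = 0 \<Longrightarrow> \<forall>l\<ge>B. ann_m \<zeta> w l = 0"
  by (simp add: ann_m_def)

lemma cre_m_vanishes_from: "\<forall>l\<ge>B. w l = 0 \<Longrightarrow> \<forall>l\<ge>Suc B. cre_m \<zeta> w l = 0"
  by (simp add: cre_m_def)

lemma funpow_ann_m_vanishes_from: "\<forall>l\<ge>B. w l = 0 \<Longrightarrow> \<forall>l\<ge>B. (ann_m \<zeta> ^^ s) w l = 0"
  by (induction s) (simp_all add: ann_m_vanishes_from)

lemma funpow_cre_m_vanishes_from: "\<forall>l\<ge>B. w l = 0 \<Longrightarrow> \<forall>l\<ge>B + r. (cre_m \<zeta> ^^ r) w l = 0"
  by (induction r) (simp_all add: cre_m_vanishes_from)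

lemma basis_vec_vanishes_from: "\<forall>l\<ge>Suc n. basis_vec n l = 0"
  by (simp add: basis_vec_def)

lemma summable_vanishes_from: "\<forall>l\<ge>B. f l = 0 \<Longrightarrow> summable f"
  by (rule summable_finite[of "{..<B}"]) auto

lemma suminf_shift_right:
  fixes h :: "nat \<Rightarrow> 'a::real_normed_vector"
  assumes "summable h"
  shows "summable (\<lambda>l. if l = 0 then 0 else h (l - 1))"
    and "(\<Sum>l. if l = 0 then 0 else h (l - 1)) = suminf h"
proof -
  show *: "summable (\<lambda>l. if l = 0 then 0 else h (l - 1))"
    using assms summable_Suc_iff[of "\<lambda>l. if l = 0 then 0 else h (l - 1)"] by simp
  show "(\<Sum>l. if l = 0 then 0 else h (l - 1)) = suminf h"
    using suminf_split_head[OF *] by simp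
qed

(* cre_m (cnj \<zeta>) is a\<^sup>\<dagger> - \<zeta>, the transpose (not the adjoint) of ann_m \<zeta> = a - \<zeta>. *)
lemma suminf_mult_ann_m:
  assumes w: "\<forall>l\<ge>B. w l = 0"
  shows "(\<Sum>l. x l * ann_m \<zeta> w l) = (\<Sum>l. cre_m (cnj \<zeta>) x l * w l)"
proof -
  define h where "h l = of_real (sqrt (Suc l)) * x l * w (Suc l)" for l
  have h: "summable h" and xw: "summable (\<lambda>l. x l * w l)"
    using w by (auto simp: h_def intro!: summable_vanishes_from[of B])
  have "(\<Sum>l. x l * ann_m \<zeta> w l) = (\<Sum>l. h l - \<zeta> * (x l * w l))"
    by (simp add: ann_m_def h_def algebra_simps)
  also have "\<dots> = suminf h - \<zeta> * (\<Sum>l. x l * w l)"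
    using suminf_diff[OF h summable_mult[OF xw]] suminf_mult[OF xw] by simp
  also have "\<dots> = (\<Sum>l. if l = 0 then 0 else h (l - 1)) - \<zeta> * (\<Sum>l. x l * w l)"
    by (simp only: suminf_shift_right(2)[OF h])
  also have "\<dots> = (\<Sum>l. (if l = 0 then 0 else h (l - 1)) - \<zeta> * (x l * w l))"
    using suminf_diff[OF suminf_shift_right(1)[OF h] summable_mult[OF xw]] suminf_mult[OF xw] by simp
  also have "\<dots> = (\<Sum>l. cre_m (cnj \<zeta>) x l * w l)"
    by (intro suminf_cong) (simp add: cre_m_def h_def algebra_simps)
  finally show ?thesis .
qed

lemma suminf_mult_cre_m:
  assumes w: "\<forall>l\<ge>B. w l = 0"
  shows "(\<Sum>l. x l * cre_m \<zeta> w l) = (\<Sum>l. ann_m (cnj \<zeta>) x l * w l)"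
proof -
  define h where "h l = of_real (sqrt (Suc l)) * x (Suc l) * w l" for l
  have h: "summable h" and xw: "summable (\<lambda>l. x l * w l)"
    using w by (auto simp: h_def intro!: summable_vanishes_from[of B])
  have "(\<Sum>l. x l * cre_m \<zeta> w l) = (\<Sum>l. (if l = 0 then 0 else h (l - 1)) - cnj \<zeta> * (x l * w l))"
    by (intro suminf_cong) (simp add: cre_m_def h_def algebra_simps)
  also have "\<dots> = (\<Sum>l. if l = 0 then 0 else h (l - 1)) - cnj \<zeta> * (\<Sum>l. x l * w l)"
    using suminf_diff[OF suminf_shift_right(1)[OF h] summable_mult[OF xw]] suminf_mult[OF xw] by simp
  also have "\<dots> = suminf h - cnj \<zeta> * (\<Sum>l. x l * w l)"
    by (simp only: suminf_shift_right(2)[OF h])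
  also have "\<dots> = (\<Sum>l. h l - cnj \<zeta> * (x l * w l))"
    using suminf_diff[OF h summable_mult[OF xw]] suminf_mult[OF xw] by simp
  also have "\<dots> = (\<Sum>l. ann_m (cnj \<zeta>) x l * w l)"
    by (simp add: ann_m_def h_def algebra_simps)
  finally show ?thesis .
qed

lemma suminf_mult_funpow_ann_m:
  "\<forall>l\<ge>B. w l = 0 \<Longrightarrow> (\<Sum>l. x l * (ann_m \<zeta> ^^ s) w l) = (\<Sum>l. (cre_m (cnj \<zeta>) ^^ s) x l * w l)"
proof (induction s arbitrary: x)
  case (Suc s)
  have "(\<Sum>l. x l * (ann_m \<zeta> ^^ Suc s) w l) = (\<Sum>l. cre_m (cnj \<zeta>) x l * (ann_m \<zeta> ^^ s) w l)"
    using suminf_mult_ann_m[OF funpow_ann_m_vanishes_from[OF Suc.prems]] by simp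
  also have "\<dots> = (\<Sum>l. (cre_m (cnj \<zeta>) ^^ Suc s) x l * w l)"
    using Suc by (simp add: funpow_Suc_right del: funpow.simps)
  finally show ?case .
qed simp

lemma suminf_mult_funpow_cre_m:
  "\<forall>l\<ge>B. w l = 0 \<Longrightarrow> (\<Sum>l. x l * (cre_m \<zeta> ^^ r) w l) = (\<Sum>l. (ann_m (cnj \<zeta>) ^^ r) x l * w l)"
proof (induction r arbitrary: x)
  case (Suc r)
  have "(\<Sum>l. x l * (cre_m \<zeta> ^^ Suc r) w l) = (\<Sum>l. ann_m (cnj \<zeta>) x l * (cre_m \<zeta> ^^ r) w l)"
    using suminf_mult_cre_m[OF funpow_cre_m_vanishes_from[OF Suc.prems]] by simp
  also have "\<dots> = (\<Sum>l. (ann_m (cnj \<zeta>) ^^ Suc r) x l * w l)"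
    using Suc by (simp add: funpow_Suc_right del: funpow.simps)
  finally show ?case .
qed simp

lemma suminf_mult_basis_vec: "(\<Sum>l. y l * basis_vec n l) = y n"
  by (subst suminf_finite[of "{n}"]) (auto simp: basis_vec_def)

lemma suminf_rho_moment_row_mult_funpow_ann_m_cre_m_basis_vec:
  assumes N: "0 < N"
  shows "(\<Sum>l. rho_moment N 0 0 \<zeta> m l * (ann_m \<zeta> ^^ s) ((cre_m \<zeta> ^^ r) (basis_vec n)) l)
    = of_real ((N + 1) / N) ^ s * rho_moment N s r \<zeta> m n"
proof -
  have vanishes: "\<forall>l\<ge>Suc n + r. (cre_m \<zeta> ^^ r) (basis_vec n) l = 0"
    by (rule funpow_cre_m_vanishes_from[OF basis_vec_vanishes_from])
  have "(\<Sum>l. rho_moment N 0 0 \<zeta> m l * (ann_m \<zeta> ^^ s) ((cre_m \<zeta> ^^ r) (basis_vec n)) l)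
      = (\<Sum>l. of_real ((N + 1) / N) ^ s * rho_moment N s 0 \<zeta> m l * (cre_m \<zeta> ^^ r) (basis_vec n) l)"
    using suminf_mult_funpow_ann_m[OF vanishes] funpow_cre_m_cnj_rho_moment_row[OF N] by simp
  also have "\<dots> = (ann_m (cnj \<zeta>) ^^ r) (\<lambda>l. of_real ((N + 1) / N) ^ s * rho_moment N s 0 \<zeta> m l) n"
    using suminf_mult_funpow_cre_m[OF basis_vec_vanishes_from] suminf_mult_basis_vec by simp
  also have "\<dots> = of_real ((N + 1) / N) ^ s * rho_moment N s r \<zeta> m n"
    by (simp add: funpow_ann_m_scale funpow_ann_m_cnj_rho_moment_row[OF N])
  finally show ?thesis .
qed

section \<open>Iterated Wirtinger derivatives of \<open>\<rho>\<close>\<close>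

lemma choose_mult_fact_Suc: "(q choose Suc d) * fact (Suc d) = (q choose d) * fact d * (q - d)"
proof -
  have "(q choose Suc d) * fact (Suc d) = (Suc d * (q choose Suc d)) * fact d"
    by (simp add: algebra_simps)
  also have "Suc d * (q choose Suc d) = (q - d) * (q choose d)"
    by (simp only: binomial_absorption binomial_absorb_comp)
  finally show ?thesis
    by (simp add: mult_ac)
qed

lemma coef_eq:
  assumes "p \<le> q" "r \<le> p"
  shows "coef p q r = (-1) ^ (p - r) * of_nat (p choose r) * of_nat ((q choose (p - r)) * fact (p - r))"
proof -
  have "(fact p :: complex) = fact r * fact (p - r) * of_nat (p choose r)"
    using binomial_fact_lemma[OF assms(2)] by (metis of_nat_fact of_nat_mult)
  then show ?thesis
    using assms unfolding coef_def by (simp add: min_absorb1 max_absorb2 field_simps)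
qed

lemma coef_Suc_left:
  assumes "Suc p \<le> q" "r \<le> Suc p"
  shows "coef (Suc p) q r = (if r = 0 then 0 else coef p q (r - 1))
    - (if r \<le> p then of_nat (q - p + r) * coef p q r else 0)"
proof -
  define F where "F k = (of_nat ((q choose k) * fact k) :: complex)" for k
  have F_Suc: "F (Suc d) = F d * of_nat (q - d)" for d
    unfolding F_def choose_mult_fact_Suc by simp
  consider "r = 0" | "r = Suc p" | r' where "r = Suc r'" "Suc r' \<le> p"
    using assms(2) by (cases r; cases "r = Suc p") auto
  then show ?thesis
  proof cases
    case 1
    have "coef (Suc p) q 0 = (-1) ^ Suc p * F (Suc p)" "coef p q 0 = (-1) ^ p * F p"
      using assms by (simp_all add: coef_eq F_def)
    then show ?thesis
      using 1 by (simp add: F_Suc algebra_simps)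
  next
    case 2
    then show ?thesis
      using assms by (simp add: coef_eq)
  next
    case 3
    define d where "d = p - Suc r'"
    have pr': "p - r' = Suc d" and qd: "q - p + Suc r' = q - d"
      using 3 assms by (auto simp: d_def)
    have "coef (Suc p) q r = (-1) ^ Suc d * (of_nat (p choose r') + of_nat (p choose Suc r')) * F (Suc d)"
      and "coef p q r' = (-1) ^ Suc d * of_nat (p choose r') * F (Suc d)"
      and "coef p q (Suc r') = (-1) ^ d * of_nat (p choose Suc r') * F d"
      using 3 assms pr' by (simp_all add: coef_eq F_def d_def)
    then have "coef (Suc p) q r = coef p q r' - of_nat (q - d) * coef p q (Suc r')"
      by (simp add: F_Suc algebra_simps)
    from this[folded qd] show ?thesis
      using 3 by simp
  qed
qed

lemma sum_coef_Suc_left: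
  fixes X :: "nat \<Rightarrow> nat \<Rightarrow> complex" and N :: complex
  assumes "Suc p \<le> q"
  shows "(\<Sum>r\<le>p. coef p q r / N ^ (q + r) *
            (X (q - p + r) (Suc r) / N - of_nat (q - p + r) * X (q - p + r - 1) r))
       = (\<Sum>r\<le>Suc p. coef (Suc p) q r / N ^ (q + r) * X (q - Suc p + r) r)"
proof -
  define A where "A r = (if r = 0 then 0 else coef p q (r - 1) / N ^ (q + r) * X (q - Suc p + r) r)" for r
  define B where "B r = (if r \<le> p then of_nat (q - p + r) * coef p q r / N ^ (q + r) * X (q - Suc p + r) r else 0)" for r
  have "(\<Sum>r\<le>p. coef p q r / N ^ (q + r) *
            (X (q - p + r) (Suc r) / N - of_nat (q - p + r) * X (q - p + r - 1) r))
      = (\<Sum>r\<le>p. A (Suc r)) - (\<Sum>r\<le>p. B r)"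
    unfolding sum_subtractf[symmetric]
  proof (rule sum.cong)
    fix r assume "r \<in> {..p}"
    moreover have "X (q - p + r) (Suc r) = X (q - Suc p + Suc r) (Suc r)"
      and "X (q - p + r - 1) r = X (q - Suc p + r) r"
      using assms by (auto intro!: arg_cong2[where f = X])
    ultimately show "coef p q r / N ^ (q + r) * (X (q - p + r) (Suc r) / N - of_nat (q - p + r) * X (q - p + r - 1) r)
        = A (Suc r) - B r"
      by (simp add: A_def B_def algebra_simps add_divide_distrib)
  qed simp
  also have "(\<Sum>r\<le>p. A (Suc r)) = (\<Sum>r\<le>Suc p. A r)"
    by (simp only: sum.atMost_Suc_shift[of A]) (simp add: A_def)
  also have "(\<Sum>r\<le>p. B r) = (\<Sum>r\<le>Suc p. B r)"
    by (simp add: B_def)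
  also have "(\<Sum>r\<le>Suc p. A r) - (\<Sum>r\<le>Suc p. B r)
      = (\<Sum>r\<le>Suc p. coef (Suc p) q r / N ^ (q + r) * X (q - Suc p + r) r)"
    unfolding sum_subtractf[symmetric]
    using assms
    by (intro sum.cong) (auto simp: A_def B_def coef_Suc_left algebra_simps add_divide_distrib diff_divide_distrib)
  finally show ?thesis .
qed

lemma Dzb_funpow_rho_moment:
  assumes N: "0 < N"
  shows "(Dzb ^^ q) (\<lambda>\<zeta>. rho_moment N 0 0 \<zeta> m n) = (\<lambda>\<zeta>. rho_moment N q 0 \<zeta> m n / of_real N ^ q)"
proof (induction q)
  case (Suc q)
  have "(Dzb ^^ Suc q) (\<lambda>\<zeta>. rho_moment N 0 0 \<zeta> m n) = Dzb (\<lambda>\<zeta>. 1 / of_real N ^ q * rho_moment N q 0 \<zeta> m n)"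
    using Suc by simp
  also have "\<dots> = (\<lambda>\<zeta>. 1 / of_real N ^ q * (rho_moment N (Suc q) 0 \<zeta> m n / of_real N - of_nat 0 * rho_moment N q (0 - 1) \<zeta> m n))"
    by (rule has_wirtinger_derivs_Dz_Dzb(2)[OF has_wirtinger_derivs_cmult[OF
          has_wirtinger_derivs_rho_moment_kernel[OF N]]])
  finally show ?case
    by (simp add: field_simps)
qed simp

lemma Dz_funpow_rho_moment:
  assumes N: "0 < N" and "p \<le> q"
  shows "(Dz ^^ p) (\<lambda>\<zeta>. rho_moment N q 0 \<zeta> m n / of_real N ^ q)
    = (\<lambda>\<zeta>. \<Sum>r\<le>p. coef p q r / of_real N ^ (q + r) * rho_moment N (q - p + r) r \<zeta> m n)"
  using assms(2)
proof (induction p)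
  case 0
  then show ?case
    by (simp add: coef_def)
next
  case (Suc p)
  have "(Dz ^^ Suc p) (\<lambda>\<zeta>. rho_moment N q 0 \<zeta> m n / of_real N ^ q)
      = Dz (\<lambda>\<zeta>. \<Sum>r\<le>p. coef p q r / of_real N ^ (q + r) * rho_moment N (q - p + r) r \<zeta> m n)"
    using Suc by simp
  also have "\<dots> = (\<lambda>\<zeta>. \<Sum>r\<le>p. coef p q r / of_real N ^ (q + r) *
      (rho_moment N (q - p + r) (Suc r) \<zeta> m n / of_real N
        - of_nat (q - p + r) * rho_moment N (q - p + r - 1) r \<zeta> m n))"
    by (rule has_wirtinger_derivs_Dz_Dzb(1)[OF has_wirtinger_derivs_sum[OF has_wirtinger_derivs_cmult[OF
          has_wirtinger_derivs_rho_moment_kernel[OF N]]]])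
  also have "\<dots> = (\<lambda>\<zeta>. \<Sum>r\<le>Suc p. coef (Suc p) q r / of_real N ^ (q + r) *
      rho_moment N (q - Suc p + r) r \<zeta> m n)"
    by (rule ext, rule sum_coef_Suc_left[OF Suc.prems])
  finally show ?case .
qed

lemma ratio_power_div:
  assumes "0 < N"
  shows "of_real ((N + 1) / N) ^ s / complex_of_real (N ^ a * (N + 1) ^ s) = 1 / of_real N ^ (a + s)"
proof -
  have "((N + 1) / N) ^ s / (N ^ a * (N + 1) ^ s) = 1 / N ^ (a + s)"
    using assms by (simp add: power_divide power_add field_simps)
  then have "complex_of_real (((N + 1) / N) ^ s / (N ^ a * (N + 1) ^ s)) = of_real (1 / N ^ (a + s))"
    by (rule arg_cong)
  then show ?thesis
    by simp
qed

lemma LL_op_rho_column: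
  assumes N: "0 < N" and "p \<le> q"
  shows "LL_op N \<zeta> p q (\<lambda>j. rho N \<zeta> j n) m
    = (\<Sum>r\<le>p. coef p q r / of_real N ^ (q + r) * rho_moment N (q - p + r) r \<zeta> m n)"
proof -
  have "coef p q r * (ann_m \<zeta> ^^ (r + (q - p))) ((cre_m \<zeta> ^^ r) (\<lambda>k. rho_moment N 0 0 \<zeta> k n)) m
      / complex_of_real (N ^ q * (N + 1) ^ r)
    = coef p q r / of_real N ^ (q + r) * rho_moment N (q - p + r) r \<zeta> m n" for r
  proof -
    have "coef p q r * (ann_m \<zeta> ^^ (r + (q - p))) ((cre_m \<zeta> ^^ r) (\<lambda>k. rho_moment N 0 0 \<zeta> k n)) m
        / complex_of_real (N ^ q * (N + 1) ^ r)
      = coef p q r * (of_real ((N + 1) / N) ^ r / complex_of_real (N ^ q * (N + 1) ^ r))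
          * rho_moment N (q - p + r) r \<zeta> m n"
      by (simp add: funpow_ann_m_cre_m_rho_moment_column[OF N] add.commute divide_inverse mult_ac)
    then show ?thesis
      unfolding ratio_power_div[OF N] by simp
  qed
  then show ?thesis
    using assms(2) by (simp add: LL_op_def rho_eq_rho_moment atLeast0AtMost)
qed

lemma suminf_rho_row_mult_LR_op:
  assumes N: "0 < N" and "p \<le> q"
  shows "(\<Sum>j. rho N \<zeta> m j * LR_op N \<zeta> p q (basis_vec n) j)
    = (\<Sum>r\<le>p. coef p q r / of_real N ^ (q + r) * rho_moment N (q - p + r) r \<zeta> m n)"
proof -
  define W where "W r = (ann_m \<zeta> ^^ (r + (q - p))) ((cre_m \<zeta> ^^ r) (basis_vec n))" for r
  define c where "c r = coef p q r / complex_of_real (N ^ p * (N + 1) ^ (r + (q - p)))" for r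
  have summable: "summable (\<lambda>j. rho N \<zeta> m j * W r j)" for r
    using funpow_ann_m_vanishes_from[OF funpow_cre_m_vanishes_from[OF basis_vec_vanishes_from]]
    by (intro summable_vanishes_from[of "Suc n + r"]) (simp add: W_def)
  have "(\<Sum>j. rho N \<zeta> m j * LR_op N \<zeta> p q (basis_vec n) j) = (\<Sum>j. \<Sum>r\<le>p. c r * (rho N \<zeta> m j * W r j))"
    using assms(2) by (simp add: LR_op_def W_def c_def atLeast0AtMost sum_distrib_left mult_ac)
  also have "\<dots> = (\<Sum>r\<le>p. c r * (\<Sum>j. rho N \<zeta> m j * W r j))"
    using summable by (simp add: suminf_sum summable_mult suminf_mult)
  also have "\<dots> = (\<Sum>r\<le>p. coef p q r / of_real N ^ (q + r) * rho_moment N (q - p + r) r \<zeta> m n)"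
  proof (rule sum.cong)
    fix r assume "r \<in> {..p}"
    have "c r * (\<Sum>j. rho N \<zeta> m j * W r j)
        = coef p q r * (of_real ((N + 1) / N) ^ (r + (q - p)) / complex_of_real (N ^ p * (N + 1) ^ (r + (q - p))))
          * rho_moment N (q - p + r) r \<zeta> m n"
      unfolding W_def c_def rho_eq_rho_moment suminf_rho_moment_row_mult_funpow_ann_m_cre_m_basis_vec[OF N]
      by (simp add: add.commute)
    also have "\<dots> = coef p q r / of_real N ^ (q + r) * rho_moment N (q - p + r) r \<zeta> m n"
      unfolding ratio_power_div[OF N] using assms(2) by (simp add: add.commute)
    finally show "c r * (\<Sum>j. rho N \<zeta> m j * W r j) = coef p q r / of_real N ^ (q + r) * rho_moment N (q - p + r) r \<zeta> m n" .
  qed simp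
  finally show ?thesis .
qed

theorem lemma3:
  fixes N :: real and \<zeta> :: complex and p q k :: nat
  assumes "N > 0" and "1 \<le> p + q" and "p + q \<le> k" and "p \<le> q"
  shows "(\<forall>m n. (Dz ^^ p) ((Dzb ^^ q) (\<lambda>z. rho N z m n)) \<zeta>
                 = (\<Sum>j. rho N \<zeta> m j * LR_op N \<zeta> p q (basis_vec n) j))
       \<and> (\<forall>m n. (Dz ^^ p) ((Dzb ^^ q) (\<lambda>z. rho N z m n)) \<zeta>
                 = LL_op N \<zeta> p q (\<lambda>j. rho N \<zeta> j n) m)"
proof -
  \<comment> \<open>The bounds on p + q only select the entries of L_k; the identities hold for all p \<le> q.\<close>
  have "(Dz ^^ p) ((Dzb ^^ q) (\<lambda>z. rho N z m n)) \<zeta>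
      = (\<Sum>r\<le>p. coef p q r / of_real N ^ (q + r) * rho_moment N (q - p + r) r \<zeta> m n)" for m n
    using Dzb_funpow_rho_moment[OF assms(1)] Dz_funpow_rho_moment[OF assms(1,4)]
    by (simp add: rho_eq_rho_moment)
  then show ?thesis
    using suminf_rho_row_mult_LR_op[OF assms(1,4)] LL_op_rho_column[OF assms(1,4)] by simp
qed

end
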